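(* Let $\mathcal{S}$ be a finite set, $\Pi$ an irreducible stochastic matrix on $\mathcal{S}$, $\kappa(x,y):=\pi_{xy}-\mathbf{1}_{x=y}$, $\mathcal{K}=\Pi-\mathrm{I}$, and $Q=(q(y))$ the unique invariant distribution of $\Pi$. Assume detailed balance: $q(y)\kappa(y,z)=q(z)\kappa(z,y)$ for all $y,z$. Let $(P(t))_{t\ge0}$, $P(t)=(p(t,y))_{y\in\mathcal{S}}$, be the curve of time-marginal laws of the continuous-time Markov chain with generator $\mathcal{K}$ started from an initial distribution $P(0)$ with all entries positive (equivalently $\partial_t p(t,y)=\sum_z p(t,z)\kappa(z,y)$). Then, for every $t_0\in(0,\infty)$, the curve $(P(t))_{t\ge t_0}$ is of steepest descent locally at $t=t_0$ for the variance functional $V(P\,|\,Q):=\sum_y q(y)\big(p(y)/q(y)\big)^2-1$, relative to the metric $$\varrho(P_1,P_2):=\big\|\boldsymbol{\ell}_1-\boldsymbol{\ell}_2\big\|_{\mathbb{H}^{-1}(\mathcal{S},Q)},\qquad P_i=\boldsymbol{\ell}_iQ .$$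
   Context: $\mathcal{M}$ denotes the set of probability vectors on $\mathcal{S}$ with strictly positive entries; for $P\in\mathcal{M}$, $P=\boldsymbol{\ell}Q$ means $\ell(y)=p(y)/q(y)$. A smooth curve $(P(t))_{t_0\le t<\infty}\subset\mathcal{M}$ is of steepest descent locally at $t_0$ for a smooth functional $F:\mathcal{M}\to\mathbb{R}$ relative to a metric $\varrho$ on $\mathcal{M}$ if it minimizes, among all smooth curves $(\widetilde P(t))_{t_0\le t<\infty}\subset\mathcal{M}$ with $\widetilde P(t_0)=P(t_0)$, the quantity $\lim_{h\downarrow0}\big(F(\widetilde P(t_0+h))-F(P(t_0))\big)/\varrho(\widetilde P(t_0+h),P(t_0))$. Notation: $\nabla f(x,y):=f(y)-f(x)$; $\mathcal{Z}:=\{(x,y):\kappa(x,y)>0\}$, $c(x,y):=\frac12\kappa(x,y)q(x)$, $\|F\|^2_{\mathbb{L}^2(\mathcal{Z},C)}:=\sum_{(x,y)\in\mathcal{Z}}c(x,y)F(x,y)^2$; $\|f\|_{\mathbb{H}^{-1}(\mathcal{S},Q)}:=\|\nabla g\|_{\mathbb{L}^2(\mathcal{Z},C)}$ for any $g$ with $\mathcal{K}g=f$ if $f$ is in the range of $\mathcal{K}$, and $:=+\infty$ otherwise. *)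

theory Defs
  imports "HOL-Analysis.Analysis"
begin

definition stochastic_matrix :: "('a::finite \<Rightarrow> 'a \<Rightarrow> real) \<Rightarrow> bool" where
  "stochastic_matrix Pm \<longleftrightarrow> (\<forall>x y. Pm x y \<ge> 0) \<and> (\<forall>x. (\<Sum>y\<in>UNIV. Pm x y) = 1)"

definition irreducible_matrix :: "('a::finite \<Rightarrow> 'a \<Rightarrow> real) \<Rightarrow> bool" where
  "irreducible_matrix Pm \<longleftrightarrow> (\<forall>x y. (x, y) \<in> {(u, v). Pm u v > 0}\<^sup>*)"

definition invariant_distribution :: "('a::finite \<Rightarrow> 'a \<Rightarrow> real) \<Rightarrow> ('a \<Rightarrow> real) \<Rightarrow> bool" where
  "invariant_distribution Pm q \<longleftrightarrow> (\<forall>y. q y \<ge> 0) \<and> (\<Sum>y\<in>UNIV. q y) = 1 \<and>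
     (\<forall>y. (\<Sum>x\<in>UNIV. q x * Pm x y) = q y)"

definition kappa :: "('a \<Rightarrow> 'a \<Rightarrow> real) \<Rightarrow> 'a \<Rightarrow> 'a \<Rightarrow> real" where
  "kappa Pm x y = Pm x y - (if x = y then 1 else 0)"

definition gen :: "('a::finite \<Rightarrow> 'a \<Rightarrow> real) \<Rightarrow> ('a \<Rightarrow> real) \<Rightarrow> 'a \<Rightarrow> real" where
  "gen Pm g x = (\<Sum>y\<in>UNIV. kappa Pm x y * g y)"

definition in_M :: "('a::finite \<Rightarrow> real) \<Rightarrow> bool" where
  "in_M p \<longleftrightarrow> (\<forall>y. p y > 0) \<and> (\<Sum>y\<in>UNIV. p y) = 1"

text \<open>Squared L2(Z,C)-norm of the discrete gradient of g, c(x,y) = kappa(x,y) q(x) / 2,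
  Z = {(x,y). kappa(x,y) > 0}.\<close>
definition grad_L2_norm :: "('a::finite \<Rightarrow> 'a \<Rightarrow> real) \<Rightarrow> ('a \<Rightarrow> real) \<Rightarrow> ('a \<Rightarrow> real) \<Rightarrow> real" where
  "grad_L2_norm Pm q g =
     sqrt (\<Sum>(x, y)\<in>{(x, y). kappa Pm x y > 0}. (kappa Pm x y * q x / 2) * (g y - g x)\<^sup>2)"

definition Hminus1_norm :: "('a::finite \<Rightarrow> 'a \<Rightarrow> real) \<Rightarrow> ('a \<Rightarrow> real) \<Rightarrow> ('a \<Rightarrow> real) \<Rightarrow> ereal" where
  "Hminus1_norm Pm q f =
     (if \<exists>g. gen Pm g = f then ereal (grad_L2_norm Pm q (SOME g. gen Pm g = f)) else \<infinity>)"

text \<open>The metric rho(P1,P2) = || l1 - l2 ||_{H^{-1}}, where l_i = p_i / q (likelihood ratios).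
  Under the hypotheses of the theorem this is always finite; it is converted to a real.\<close>
definition rho :: "('a::finite \<Rightarrow> 'a \<Rightarrow> real) \<Rightarrow> ('a \<Rightarrow> real) \<Rightarrow> ('a \<Rightarrow> real) \<Rightarrow> ('a \<Rightarrow> real) \<Rightarrow> real" where
  "rho Pm q P1 P2 = real_of_ereal (Hminus1_norm Pm q (\<lambda>y. P1 y / q y - P2 y / q y))"

definition variance_fun :: "('a::finite \<Rightarrow> real) \<Rightarrow> ('a \<Rightarrow> real) \<Rightarrow> real" where
  "variance_fun q p = (\<Sum>y\<in>UNIV. q y * (p y / q y)\<^sup>2) - 1"

definition smooth_curve_M :: "real \<Rightarrow> (real \<Rightarrow> 'a::finite \<Rightarrow> real) \<Rightarrow> bool" where
  "smooth_curve_M t0 C \<longleftrightarrow> (\<forall>t\<ge>t0. in_M (C t)) \<and>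
     (\<forall>y. \<exists>D :: nat \<Rightarrow> real \<Rightarrow> real. D 0 = (\<lambda>t. C t y) \<and>
        (\<forall>n t. t \<ge> t0 \<longrightarrow> (D n has_real_derivative D (Suc n) t) (at t within {t0..})))"

definition descent_ratio ::
  "(('a \<Rightarrow> real) \<Rightarrow> real) \<Rightarrow> (('a \<Rightarrow> real) \<Rightarrow> ('a \<Rightarrow> real) \<Rightarrow> real) \<Rightarrow> (real \<Rightarrow> 'a \<Rightarrow> real)
    \<Rightarrow> (real \<Rightarrow> 'a \<Rightarrow> real) \<Rightarrow> real \<Rightarrow> real \<Rightarrow> real" where
  "descent_ratio F \<rho> P C t0 h = (F (C (t0 + h)) - F (P t0)) / \<rho> (C (t0 + h)) (P t0)"

definition steepest_descent_at ::
  "(('a::finite \<Rightarrow> real) \<Rightarrow> real) \<Rightarrow> (('a \<Rightarrow> real) \<Rightarrow> ('a \<Rightarrow> real) \<Rightarrow> real) \<Rightarrow> (real \<Rightarrow> 'a \<Rightarrow> real)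
    \<Rightarrow> real \<Rightarrow> bool" where
  "steepest_descent_at F \<rho> P t0 \<longleftrightarrow> smooth_curve_M t0 P \<and>
     (\<exists>L. (descent_ratio F \<rho> P P t0 \<longlongrightarrow> L) (at_right 0) \<and>
        (\<forall>C. smooth_curve_M t0 C \<and> C t0 = P t0 \<longrightarrow>
           (\<forall>L'. (descent_ratio F \<rho> P C t0 \<longlongrightarrow> L') (at_right 0) \<longrightarrow> L \<le> L')))"

end

theory Submission
  imports Defs
begin

text \<open>Write P = l Q and let B(a, b) be the Dirichlet form, the L2(Z, C) inner product of the
  discrete gradients of a and b. Detailed balance gives Green's formula B(a, b) = - <a, K b>_Q;
  hence rho(P1, P2) = sqrt B(g, g) for every g with K g = l1 - l2, and
  V(P1) - V(P2) = - 2 B(l2, g) + |K g|^2_Q. By Cauchy-Schwarz, every descent ratio from P = l Q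
  is therefore at least - 2 sqrt B(l, l), whatever the competing curve. Along the Markov flow,
  detailed balance turns the forward equation into d/dt l = K l, so l(t0 + h) - l(t0) = K g with
  g the integral of l over [t0, t0 + h]; since g = h l(t0) + o(h), the flow attains the bound
  as h tends to 0.\<close>

definition q_inner :: "('a::finite \<Rightarrow> real) \<Rightarrow> ('a \<Rightarrow> real) \<Rightarrow> ('a \<Rightarrow> real) \<Rightarrow> real" where
  "q_inner q a b = (\<Sum>x\<in>UNIV. q x * a x * b x)"

definition dirichlet_form ::
  "('a::finite \<Rightarrow> 'a \<Rightarrow> real) \<Rightarrow> ('a \<Rightarrow> real) \<Rightarrow> ('a \<Rightarrow> real) \<Rightarrow> ('a \<Rightarrow> real) \<Rightarrow> real" where
  "dirichlet_form Pm q a b =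
     (\<Sum>(x, y)\<in>{(x, y). kappa Pm x y > 0}. (kappa Pm x y * q x / 2) * ((a y - a x) * (b y - b x)))"

lemma grad_L2_norm_eq_sqrt_dirichlet_form: "grad_L2_norm Pm q g = sqrt (dirichlet_form Pm q g g)"
  by (simp add: grad_L2_norm_def dirichlet_form_def power2_eq_square)

lemma dirichlet_form_commute: "dirichlet_form Pm q a b = dirichlet_form Pm q b a"
  unfolding dirichlet_form_def by (simp add: mult.commute)

lemma dirichlet_form_diff_left:
  "dirichlet_form Pm q (\<lambda>z. a z - c z) b = dirichlet_form Pm q a b - dirichlet_form Pm q c b"
  unfolding dirichlet_form_def sum_subtractf[symmetric] by (rule sum.cong) (auto simp: field_simps)

lemma dirichlet_form_scale_left:
  "dirichlet_form Pm q (\<lambda>z. t * a z) b = t * dirichlet_form Pm q a b"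
  unfolding dirichlet_form_def sum_distrib_left by (rule sum.cong) (auto simp: algebra_simps)

lemma dirichlet_form_scale_right:
  "dirichlet_form Pm q a (\<lambda>z. t * b z) = t * dirichlet_form Pm q a b"
  by (metis dirichlet_form_commute dirichlet_form_scale_left)

lemma dirichlet_form_nonneg:
  assumes "\<And>x. 0 \<le> q x"
  shows "0 \<le> dirichlet_form Pm q a a"
  unfolding dirichlet_form_def by (intro sum_nonneg) (auto simp: assms)

lemma weighted_Cauchy_Schwarz_sum:
  fixes w u v :: "'i \<Rightarrow> real"
  assumes "\<And>i. i \<in> I \<Longrightarrow> 0 \<le> w i"
  shows "\<bar>\<Sum>i\<in>I. w i * (u i * v i)\<bar>
    \<le> sqrt (\<Sum>i\<in>I. w i * (u i * u i)) * sqrt (\<Sum>i\<in>I. w i * (v i * v i))"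
proof -
  have "(\<Sum>i\<in>I. w i * (u i * v i))\<^sup>2 = (\<Sum>i\<in>I. (sqrt (w i) * u i) * (sqrt (w i) * v i))\<^sup>2"
    using assms by (intro arg_cong[where f = "\<lambda>s. s\<^sup>2"] sum.cong) (auto simp: algebra_simps)
  also have "\<dots> \<le> (\<Sum>i\<in>I. (sqrt (w i) * u i)\<^sup>2) * (\<Sum>i\<in>I. (sqrt (w i) * v i)\<^sup>2)"
    by (rule Cauchy_Schwarz_ineq_sum)
  also have "\<dots> = (\<Sum>i\<in>I. w i * (u i * u i)) * (\<Sum>i\<in>I. w i * (v i * v i))"
    using assms by (intro arg_cong2[where f = "(*)"] sum.cong) (auto simp: power_mult_distrib power2_eq_square)
  finally show ?thesis
    by (metis real_sqrt_abs real_sqrt_le_mono real_sqrt_mult)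
qed

lemma dirichlet_form_Cauchy_Schwarz:
  assumes "\<And>x. 0 \<le> q x"
  shows "\<bar>dirichlet_form Pm q a b\<bar> \<le> sqrt (dirichlet_form Pm q a a) * sqrt (dirichlet_form Pm q b b)"
  unfolding dirichlet_form_def case_prod_unfold
  by (rule weighted_Cauchy_Schwarz_sum) (auto simp: assms)

lemma tendsto_dirichlet_form:
  assumes "\<And>z. ((\<lambda>h. a h z) \<longlongrightarrow> a0 z) F" and "\<And>z. ((\<lambda>h. b h z) \<longlongrightarrow> b0 z) F"
  shows "((\<lambda>h. dirichlet_form Pm q (a h) (b h)) \<longlongrightarrow> dirichlet_form Pm q a0 b0) F"
  unfolding dirichlet_form_def case_prod_unfold by (intro tendsto_intros assms)

lemma gen_eq_sum_diff:
  assumes "stochastic_matrix Pm"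
  shows "gen Pm g x = (\<Sum>y\<in>UNIV. Pm x y * (g y - g x))"
proof -
  have "gen Pm g x = (\<Sum>y\<in>UNIV. Pm x y * g y) - (\<Sum>y\<in>UNIV. Pm x y) * g x"
    using assms
    by (simp add: gen_def kappa_def stochastic_matrix_def left_diff_distrib sum_subtractf
        if_distrib[where f = "\<lambda>c. c * _"] cong: if_cong)
  then show ?thesis
    by (simp add: right_diff_distrib sum_subtractf sum_distrib_right)
qed

lemma dirichlet_form_eq_double_sum:
  assumes "stochastic_matrix Pm"
  shows "dirichlet_form Pm q a b =
    (\<Sum>x\<in>UNIV. \<Sum>y\<in>UNIV. q x * Pm x y * ((a y - a x) * (b y - b x))) / 2"
proof -
  have off_edges: "(case e of (x, y) \<Rightarrow> kappa Pm x y * q x / 2 * ((a y - a x) * (b y - b x))) = 0"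
    if "e \<notin> {(x, y). kappa Pm x y > 0}" for e
  proof (cases e)
    case (Pair x y)
    with that assms have "x = y \<or> kappa Pm x y = 0"
      by (auto simp: kappa_def stochastic_matrix_def intro: order.antisym)
    then show ?thesis using Pair by auto
  qed
  have "dirichlet_form Pm q a b =
      (\<Sum>(x, y)\<in>UNIV. kappa Pm x y * q x / 2 * ((a y - a x) * (b y - b x)))"
    unfolding dirichlet_form_def by (rule sum.mono_neutral_left) (simp, simp, blast intro: off_edges)
  also have "\<dots> = (\<Sum>(x, y)\<in>UNIV. q x * Pm x y * ((a y - a x) * (b y - b x))) / 2"
    unfolding sum_divide_distrib by (intro sum.cong) (auto simp: kappa_def)
  finally show ?thesis
    by (simp add: sum.cartesian_product UNIV_Times_UNIV[symmetric] del: UNIV_Times_UNIV)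
qed

lemma detailed_balance_Pm:
  assumes "\<forall>y z. q y * kappa Pm y z = q z * kappa Pm z y"
  shows "q x * Pm x y = q y * Pm y x"
  using assms[rule_format, of x y] by (cases "x = y") (auto simp: kappa_def)

lemma dirichlet_form_eq_neg_q_inner_gen:
  assumes stoch: "stochastic_matrix Pm"
    and balance: "\<forall>y z. q y * kappa Pm y z = q z * kappa Pm z y"
  shows "dirichlet_form Pm q a b = - q_inner q a (gen Pm b)"
proof -
  define w where "w x y = q x * Pm x y" for x y
  have "(\<Sum>x\<in>UNIV. \<Sum>y\<in>UNIV. w x y * (a y * (b y - b x)))
      = (\<Sum>y\<in>UNIV. \<Sum>x\<in>UNIV. w y x * (a y * (b y - b x)))"
    by (subst sum.swap) (simp add: w_def detailed_balance_Pm[OF balance])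
  also have "\<dots> = - (\<Sum>x\<in>UNIV. \<Sum>y\<in>UNIV. w x y * (a x * (b y - b x)))"
    by (simp add: sum_negf[symmetric] algebra_simps)
  finally have swap: "(\<Sum>x\<in>UNIV. \<Sum>y\<in>UNIV. w x y * (a y * (b y - b x)))
      = - (\<Sum>x\<in>UNIV. \<Sum>y\<in>UNIV. w x y * (a x * (b y - b x)))" .
  have gen: "(\<Sum>x\<in>UNIV. \<Sum>y\<in>UNIV. w x y * (a x * (b y - b x))) = q_inner q a (gen Pm b)"
    by (simp add: q_inner_def gen_eq_sum_diff[OF stoch] w_def sum_distrib_left algebra_simps)
  have "dirichlet_form Pm q a b = ((\<Sum>x\<in>UNIV. \<Sum>y\<in>UNIV. w x y * (a y * (b y - b x)))
      - (\<Sum>x\<in>UNIV. \<Sum>y\<in>UNIV. w x y * (a x * (b y - b x)))) / 2"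
    by (simp add: dirichlet_form_eq_double_sum[OF stoch] w_def sum_subtractf[symmetric] algebra_simps)
  then show ?thesis
    by (simp add: swap gen)
qed

lemma dirichlet_form_gen_cong:
  assumes "stochastic_matrix Pm" and "\<forall>y z. q y * kappa Pm y z = q z * kappa Pm z y"
    and "gen Pm a = gen Pm b"
  shows "dirichlet_form Pm q a a = dirichlet_form Pm q b b"
  using dirichlet_form_eq_neg_q_inner_gen[OF assms(1,2)] dirichlet_form_commute assms(3) by metis

lemma rho_eq_sqrt_dirichlet_form:
  assumes "stochastic_matrix Pm" and "\<forall>y z. q y * kappa Pm y z = q z * kappa Pm z y"
    and "gen Pm g = (\<lambda>y. c y / q y - p y / q y)"
  shows "rho Pm q c p = sqrt (dirichlet_form Pm q g g)"
proof -
  let ?g = "SOME g. gen Pm g = (\<lambda>y. c y / q y - p y / q y)"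
  have "gen Pm ?g = gen Pm g"
    using assms(3) by (metis (mono_tags) someI_ex)
  then have "dirichlet_form Pm q ?g ?g = dirichlet_form Pm q g g"
    by (rule dirichlet_form_gen_cong[OF assms(1,2)])
  then show ?thesis
    using assms(3) by (auto simp: rho_def Hminus1_norm_def grad_L2_norm_eq_sqrt_dirichlet_form)
qed

lemma variance_fun_diff:
  assumes "stochastic_matrix Pm" and "\<forall>y z. q y * kappa Pm y z = q z * kappa Pm z y"
    and "\<And>y. q y \<noteq> 0" and "gen Pm g = (\<lambda>y. c y / q y - p y / q y)"
  shows "variance_fun q c - variance_fun q p =
    - 2 * dirichlet_form Pm q (\<lambda>y. p y / q y) g + q_inner q (gen Pm g) (gen Pm g)"
proof -
  have "variance_fun q c - variance_fun q p = (\<Sum>y\<in>UNIV. q y * (c y / q y)\<^sup>2 - q y * (p y / q y)\<^sup>2)"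
    by (simp add: variance_fun_def sum_subtractf)
  also have "\<dots> = 2 * q_inner q (\<lambda>y. p y / q y) (gen Pm g) + q_inner q (gen Pm g) (gen Pm g)"
    unfolding q_inner_def assms(4) sum_distrib_left sum.distrib[symmetric]
    by (rule sum.cong) (simp_all add: assms(3) field_simps power2_eq_square)
  finally show ?thesis
    by (simp add: dirichlet_form_eq_neg_q_inner_gen[OF assms(1,2)])
qed

lemma gen_square_le:
  assumes "stochastic_matrix Pm"
  shows "(gen Pm g x)\<^sup>2 \<le> (\<Sum>y\<in>UNIV. Pm x y * (g y - g x)\<^sup>2)"
proof -
  have nonneg: "\<And>y. 0 \<le> Pm x y" and row: "(\<Sum>y\<in>UNIV. Pm x y) = 1"
    using assms by (auto simp: stochastic_matrix_def)
  have "(gen Pm g x)\<^sup>2 = (\<Sum>y\<in>UNIV. sqrt (Pm x y) * (sqrt (Pm x y) * (g y - g x)))\<^sup>2"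
    using nonneg by (simp add: gen_eq_sum_diff[OF assms] mult.assoc[symmetric])
  also have "\<dots> \<le> (\<Sum>y\<in>UNIV. (sqrt (Pm x y))\<^sup>2) * (\<Sum>y\<in>UNIV. (sqrt (Pm x y) * (g y - g x))\<^sup>2)"
    by (rule Cauchy_Schwarz_ineq_sum)
  also have "\<dots> = (\<Sum>y\<in>UNIV. Pm x y * (g y - g x)\<^sup>2)"
    using nonneg row by (simp add: power_mult_distrib)
  finally show ?thesis .
qed

lemma q_inner_gen_le_dirichlet_form:
  assumes "stochastic_matrix Pm" and "\<And>x. 0 \<le> q x"
  shows "q_inner q (gen Pm g) (gen Pm g) \<le> 2 * dirichlet_form Pm q g g"
proof -
  have "q_inner q (gen Pm g) (gen Pm g) = (\<Sum>x\<in>UNIV. q x * (gen Pm g x)\<^sup>2)"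
    by (simp add: q_inner_def power2_eq_square mult.assoc)
  also have "\<dots> \<le> (\<Sum>x\<in>UNIV. q x * (\<Sum>y\<in>UNIV. Pm x y * (g y - g x)\<^sup>2))"
    by (intro sum_mono mult_left_mono gen_square_le assms)
  also have "\<dots> = (\<Sum>x\<in>UNIV. \<Sum>y\<in>UNIV. q x * Pm x y * ((g y - g x) * (g y - g x)))"
    by (simp add: sum_distrib_left power2_eq_square mult.assoc)
  also have "\<dots> = 2 * dirichlet_form Pm q g g"
    by (simp add: dirichlet_form_eq_double_sum[OF assms(1)])
  finally show ?thesis .
qed

lemma q_inner_self_nonneg:
  assumes "\<And>x. 0 \<le> q x"
  shows "0 \<le> q_inner q f f"
  unfolding q_inner_def using assms by (intro sum_nonneg) (simp add: mult.assoc)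

lemma variance_descent_ratio_ge:
  assumes stoch: "stochastic_matrix Pm"
    and balance: "\<forall>y z. q y * kappa Pm y z = q z * kappa Pm z y"
    and q_pos: "\<And>y. 0 < q y"
  shows "- 2 * sqrt (dirichlet_form Pm q (\<lambda>y. p y / q y) (\<lambda>y. p y / q y))
    \<le> (variance_fun q c - variance_fun q p) / rho Pm q c p"
proof -
  let ?B = "dirichlet_form Pm q" and ?l = "\<lambda>y. p y / q y"
  have q_nonneg: "0 \<le> q x" and q_neq0: "q x \<noteq> 0" for x
    using q_pos[of x] by simp_all
  have B_nonneg: "\<And>a. 0 \<le> ?B a a" by (rule dirichlet_form_nonneg[where q = q, OF q_nonneg])
  show ?thesis
  proof (cases "\<exists>g. gen Pm g = (\<lambda>y. c y / q y - p y / q y)")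
    case False
    \<comment> \<open>the H^-1 norm is infinite, and rho takes the junk value real_of_ereal \<infinity> = 0\<close>
    then have "rho Pm q c p = 0" by (simp add: rho_def Hminus1_norm_def)
    then show ?thesis using B_nonneg by simp
  next
    case True
    then obtain g where g: "gen Pm g = (\<lambda>y. c y / q y - p y / q y)" by blast
    have rho: "rho Pm q c p = sqrt (?B g g)"
      by (rule rho_eq_sqrt_dirichlet_form[OF stoch balance g])
    have "- 2 * sqrt (?B ?l ?l) * sqrt (?B g g) \<le> - 2 * ?B ?l g"
      using dirichlet_form_Cauchy_Schwarz[where q = q and Pm = Pm and a = ?l and b = g, OF q_nonneg]
      by linarith
    also have "\<dots> \<le> variance_fun q c - variance_fun q p"
      using variance_fun_diff[OF stoch balance q_neq0 g] q_inner_self_nonneg[where q = q, OF q_nonneg]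
      by simp
    finally show ?thesis
      using B_nonneg[of g] B_nonneg[of ?l] by (cases "?B g g = 0") (simp_all add: rho pos_le_divide_eq)
  qed
qed

text \<open>With u the time average of the likelihood ratio over [t0, t0 + h], the right-hand side
  tends to the lower bound of the previous lemma as h tends to 0.\<close>

lemma variance_descent_ratio_le:
  assumes stoch: "stochastic_matrix Pm"
    and balance: "\<forall>y z. q y * kappa Pm y z = q z * kappa Pm z y"
    and q_pos: "\<And>y. 0 < q y"
    and h: "0 < h"
    and u: "gen Pm (\<lambda>z. h * u z) = (\<lambda>y. c y / q y - p y / q y)"
  shows "(variance_fun q c - variance_fun q p) / rho Pm q c p \<le>
    - 2 * sqrt (dirichlet_form Pm q u u)
    + 2 * sqrt (dirichlet_form Pm q (\<lambda>z. p z / q z - u z) (\<lambda>z. p z / q z - u z))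
    + 2 * h * sqrt (dirichlet_form Pm q u u)"
proof -
  let ?B = "dirichlet_form Pm q" and ?l = "\<lambda>y. p y / q y"
  define su where "su = sqrt (?B u u)"
  define sd where "sd = sqrt (?B (\<lambda>z. ?l z - u z) (\<lambda>z. ?l z - u z))"
  have q_nonneg: "0 \<le> q x" and q_neq0: "q x \<noteq> 0" for x
    using q_pos[of x] by simp_all
  have su_nonneg: "0 \<le> su" and sd_nonneg: "0 \<le> sd"
    by (simp_all add: su_def sd_def dirichlet_form_nonneg[where q = q, OF q_nonneg])
  have Bu: "?B u u = su\<^sup>2"
    by (simp add: su_def dirichlet_form_nonneg[where q = q, OF q_nonneg])
  have B_hu: "?B (\<lambda>z. h * u z) (\<lambda>z. h * u z) = (h * su)\<^sup>2"
    by (simp add: dirichlet_form_scale_left dirichlet_form_scale_right Bu power2_eq_square)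
  have rho: "rho Pm q c p = h * su"
    using rho_eq_sqrt_dirichlet_form[OF stoch balance u] h su_nonneg by (simp add: B_hu)
  have cs: "\<bar>?B (\<lambda>z. ?l z - u z) u\<bar> \<le> sd * su"
    using dirichlet_form_Cauchy_Schwarz[where q = q, OF q_nonneg] unfolding su_def sd_def .
  have "- ?B ?l u \<le> - su\<^sup>2 + sd * su"
    using dirichlet_form_diff_left[of Pm q ?l u u] abs_le_D2[OF cs] Bu by linarith
  from mult_left_mono[OF this, of "2 * h"]
  have "- 2 * h * ?B ?l u \<le> h * su * (- 2 * su + 2 * sd)"
    using h by (simp add: algebra_simps power2_eq_square)
  moreover have "variance_fun q c - variance_fun q p \<le> - 2 * h * ?B ?l u + 2 * (h * su)\<^sup>2"
    using variance_fun_diff[OF stoch balance q_neq0 u, unfolded dirichlet_form_scale_right]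
      q_inner_gen_le_dirichlet_form[where q = q, OF stoch q_nonneg, of "\<lambda>z. h * u z",
        unfolded B_hu]
    by linarith
  ultimately have "variance_fun q c - variance_fun q p \<le> h * su * (- 2 * su + 2 * sd + 2 * h * su)"
    by (simp add: algebra_simps power2_eq_square)
  then show ?thesis
    using h su_nonneg sd_nonneg
    by (cases "su = 0") (simp_all add: rho su_def[symmetric] sd_def[symmetric] divide_le_eq mult_ac)
qed

lemma invariant_distribution_pos:
  assumes stoch: "stochastic_matrix Pm" and irred: "irreducible_matrix Pm"
    and inv: "invariant_distribution Pm q"
  shows "0 < q y"
proof (rule ccontr)
  have q_nonneg: "0 \<le> q x" for x using inv by (simp add: invariant_distribution_def)
  assume "\<not> 0 < q y"
  with q_nonneg have "q y = 0" by (simp add: order.antisym not_less)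
  have "q x = 0" for x
    using irred[unfolded irreducible_matrix_def, rule_format, of x y]
  proof (induction rule: converse_rtrancl_induct)
    case base
    show ?case by fact
  next
    case (step a b)
    then have "Pm a b > 0" and "q b = 0" by auto
    have "q a * Pm a b \<le> (\<Sum>x\<in>UNIV. q x * Pm x b)"
      by (rule member_le_sum) (use q_nonneg stoch in \<open>auto simp: stochastic_matrix_def\<close>)
    also have "\<dots> = 0" using inv \<open>q b = 0\<close> by (simp add: invariant_distribution_def)
    finally show ?case
      using q_nonneg[of a] \<open>Pm a b > 0\<close> by (simp add: mult_le_0_iff)
  qed
  then show False using inv by (simp add: invariant_distribution_def)
qed

lemma add_sum_kappa_eq_sum:
  fixes p :: "'a::finite \<Rightarrow> real"
  shows "p y + (\<Sum>z\<in>UNIV. p z * kappa Pm z y) = (\<Sum>z\<in>UNIV. p z * Pm z y)"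
  by (simp add: kappa_def right_diff_distrib sum_subtractf if_distrib[where f = "\<lambda>c. _ * c"]
      cong: if_cong)

lemma integral_average_tendsto:
  fixes f :: "real \<Rightarrow> real"
  assumes "continuous_on {t0..} f"
  shows "((\<lambda>h. integral {t0..t0 + h} f / h) \<longlongrightarrow> f t0) (at_right 0)"
proof -
  have "continuous_on {t0..t0 + 1} f"
    by (rule continuous_on_subset[OF assms]) auto
  then have "((\<lambda>u. integral {t0..u} f) has_real_derivative f t0) (at t0 within {t0..t0 + 1})"
    unfolding has_real_derivative_iff_has_vector_derivative
    by (rule integral_has_vector_derivative) simp
  then have "((\<lambda>u. integral {t0..u} f / (u - t0)) \<longlongrightarrow> f t0) (at_right t0)"
    by (simp add: has_field_derivative_iff at_within_Icc_at_right)
  then show ?thesis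
    by (simp add: at_right_to_0[of t0] filterlim_filtermap add.commute)
qed

lemma steepest_descent_atI:
  assumes smooth: "smooth_curve_M t0 P"
    and lower: "\<And>c. L \<le> (F c - F (P t0)) / \<rho> c (P t0)"
    and upper: "\<forall>\<^sub>F h in at_right 0. descent_ratio F \<rho> P P t0 h \<le> U h"
    and U: "(U \<longlongrightarrow> L) (at_right 0)"
  shows "steepest_descent_at F \<rho> P t0"
proof -
  have below: "L \<le> descent_ratio F \<rho> P C t0 h" for C h
    unfolding descent_ratio_def by (rule lower)
  have "(descent_ratio F \<rho> P P t0 \<longlongrightarrow> L) (at_right 0)"
    by (rule tendsto_sandwich[OF _ upper tendsto_const U]) (simp add: below)
  moreover have "L \<le> L'" if "(descent_ratio F \<rho> P C t0 \<longlongrightarrow> L') (at_right 0)" for C L'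
    using that by (rule tendsto_le[OF trivial_limit_at_right_real _ tendsto_const]) (simp add: below)
  ultimately show ?thesis
    using smooth unfolding steepest_descent_at_def by blast
qed

primrec kappa_pow :: "('a::finite \<Rightarrow> 'a \<Rightarrow> real) \<Rightarrow> nat \<Rightarrow> 'a \<Rightarrow> 'a \<Rightarrow> real" where
  "kappa_pow Pm 0 = (\<lambda>z y. if z = y then 1 else 0)"
| "kappa_pow Pm (Suc n) = (\<lambda>z y. \<Sum>w\<in>UNIV. kappa Pm z w * kappa_pow Pm n w y)"

locale forward_equation =
  fixes Pm :: "'a::finite \<Rightarrow> 'a \<Rightarrow> real"
    and P :: "real \<Rightarrow> 'a \<Rightarrow> real"
  assumes stoch: "stochastic_matrix Pm"
    and init_pos: "\<forall>y. P 0 y > 0"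
    and init_sum: "(\<Sum>y\<in>UNIV. P 0 y) = 1"
    and kolmogorov: "\<forall>y t. t \<ge> 0 \<longrightarrow>
        ((\<lambda>s. P s y) has_real_derivative (\<Sum>z\<in>UNIV. P t z * kappa Pm z y)) (at t within {0..})"
begin

lemma marginal_has_derivative:
  "0 \<le> t \<Longrightarrow> ((\<lambda>s. P s y) has_real_derivative (\<Sum>z\<in>UNIV. P t z * kappa Pm z y)) (at t within {0..})"
  using kolmogorov by blast

lemma continuous_on_marginal: "continuous_on {0..} (\<lambda>s. P s y)"
  unfolding continuous_on_eq_continuous_within
  using marginal_has_derivative DERIV_continuous by fastforce

lemma init_le_exp_mult:
  assumes "0 \<le> T" and nonneg: "\<And>s z. 0 \<le> s \<Longrightarrow> s < T \<Longrightarrow> 0 \<le> P s z"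
  shows "P 0 y \<le> exp T * P T y"
proof -
  define E where "E s = exp s * P s y" for s
  have "E 0 \<le> E T"
  proof (rule DERIV_nonneg_imp_increasing_open[OF \<open>0 \<le> T\<close>])
    fix x assume x: "0 < x" "x < T"
    then have "at x within {0..} = at x"
      by (intro at_within_interior) simp
    then have "((\<lambda>s. P s y) has_real_derivative (\<Sum>z\<in>UNIV. P x z * kappa Pm z y)) (at x)"
      using marginal_has_derivative[of x y] x by simp
    from DERIV_mult[OF DERIV_exp this]
    have "(E has_real_derivative exp x * (P x y + (\<Sum>z\<in>UNIV. P x z * kappa Pm z y))) (at x)"
      unfolding E_def by (simp add: algebra_simps)
    then have "(E has_real_derivative exp x * (\<Sum>z\<in>UNIV. P x z * Pm z y)) (at x)"
      by (simp only: add_sum_kappa_eq_sum)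
    moreover have "0 \<le> exp x * (\<Sum>z\<in>UNIV. P x z * Pm z y)"
      using nonneg x stoch by (intro mult_nonneg_nonneg sum_nonneg) (auto simp: stochastic_matrix_def)
    ultimately show "\<exists>d. (E has_real_derivative d) (at x) \<and> 0 \<le> d" by blast
  next
    show "continuous_on {0..T} E"
      unfolding E_def by (intro continuous_intros continuous_on_subset[OF continuous_on_marginal]) auto
  qed
  then show ?thesis by (simp add: E_def)
qed

lemma marginal_pos:
  assumes "0 \<le> t"
  shows "0 < P t y"
proof (rule ccontr)
  define A where "A = {s. 0 \<le> s \<and> (\<exists>y. P s y \<le> 0)}"
  assume "\<not> 0 < P t y"
  with assms have "t \<in> A" by (auto simp: A_def not_less)
  have "A = (\<Union>y. {0..} \<inter> (\<lambda>s. P s y) -` {..0})" by (auto simp: A_def)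
  then have "closed A"
    by (simp only:) (intro closed_UN ballI continuous_closed_preimage[OF continuous_on_marginal]
        closed_atLeast closed_atMost finite)
  have bdd: "bdd_below A" by (rule bdd_belowI[of _ 0]) (simp add: A_def)
  define T where "T = Inf A"
  have "T \<in> A"
    unfolding T_def using \<open>t \<in> A\<close> bdd \<open>closed A\<close> by (intro closed_contains_Inf) auto
  then obtain y0 where "0 \<le> T" and "P T y0 \<le> 0" by (auto simp: A_def)
  have "0 \<le> P s z" if "0 \<le> s" "s < T" for s z
  proof (rule ccontr)
    assume "\<not> 0 \<le> P s z"
    with that have "s \<in> A" unfolding A_def by (auto intro!: exI[of _ z])
    then have "T \<le> s" unfolding T_def by (rule cInf_lower[OF _ bdd])
    with that show False by simp
  qed
  from init_le_exp_mult[OF \<open>0 \<le> T\<close> this]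
  have "P 0 y0 \<le> exp T * P T y0" .
  also have "\<dots> \<le> 0" using \<open>P T y0 \<le> 0\<close> by (simp add: mult_nonneg_nonpos)
  finally show False using init_pos by (meson not_le)
qed

lemma marginal_sum:
  assumes "0 \<le> t"
  shows "(\<Sum>y\<in>UNIV. P t y) = 1"
proof -
  have "((\<lambda>s. \<Sum>y\<in>UNIV. P s y) has_real_derivative 0) (at s within {0..})" if "s \<in> {0..}" for s
  proof -
    have "(\<Sum>y\<in>UNIV. \<Sum>z\<in>UNIV. P s z * kappa Pm z y)
        = (\<Sum>z\<in>UNIV. P s z * (\<Sum>y\<in>UNIV. kappa Pm z y))"
      by (subst sum.swap) (simp add: sum_distrib_left)
    also have "\<dots> = 0"
      using stoch by (simp add: kappa_def sum_subtractf stochastic_matrix_def)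
    finally have mass_flux: "(\<Sum>y\<in>UNIV. \<Sum>z\<in>UNIV. P s z * kappa Pm z y) = 0" .
    have "((\<lambda>s. \<Sum>y\<in>UNIV. P s y) has_real_derivative
        (\<Sum>y\<in>UNIV. \<Sum>z\<in>UNIV. P s z * kappa Pm z y)) (at s within {0..})"
      using that by (intro DERIV_sum marginal_has_derivative) simp
    then show ?thesis unfolding mass_flux .
  qed
  then obtain c where "\<forall>s\<in>{0..}. (\<Sum>y\<in>UNIV. P s y) = c"
    by (rule has_field_derivative_zero_constant[OF convex_real_interval(1), elim_format]) auto
  then show ?thesis using assms init_sum by force
qed

lemma smooth_curve:
  assumes "0 \<le> t0"
  shows "smooth_curve_M t0 P"
  unfolding smooth_curve_M_def
proof (intro conjI allI impI)
  fix t assume "t0 \<le> t"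
  then show "in_M (P t)" using assms marginal_pos marginal_sum by (simp add: in_M_def)
next
  fix y
  define D where "D n t = (\<Sum>z\<in>UNIV. P t z * kappa_pow Pm n z y)" for n t
  have "D 0 = (\<lambda>t. P t y)" by (simp add: D_def fun_eq_iff if_distrib cong: if_cong)
  moreover have "(D n has_real_derivative D (Suc n) t) (at t within {t0..})" if "t0 \<le> t" for n t
  proof -
    have "(D n has_real_derivative (\<Sum>z\<in>UNIV. (\<Sum>w\<in>UNIV. P t w * kappa Pm w z) * kappa_pow Pm n z y))
        (at t within {0..})"
      unfolding D_def using that assms by (intro DERIV_sum DERIV_cmult_right marginal_has_derivative) simp
    moreover have "(\<Sum>z\<in>UNIV. (\<Sum>w\<in>UNIV. P t w * kappa Pm w z) * kappa_pow Pm n z y) = D (Suc n) t"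
      unfolding D_def by (simp add: sum_distrib_left sum_distrib_right mult.assoc) (rule sum.swap)
    ultimately show ?thesis using assms by (auto intro: DERIV_subset)
  qed
  ultimately show "\<exists>D. D 0 = (\<lambda>t. P t y) \<and>
      (\<forall>n t. t0 \<le> t \<longrightarrow> (D n has_real_derivative D (Suc n) t) (at t within {t0..}))"
    by blast
qed

end

locale reversible_forward_equation = forward_equation +
  fixes q :: "'a::finite \<Rightarrow> real"
  assumes q_pos: "\<And>y. 0 < q y"
    and balance: "\<forall>y z. q y * kappa Pm y z = q z * kappa Pm z y"
begin

definition likelihood :: "real \<Rightarrow> 'a \<Rightarrow> real" where
  "likelihood t y = P t y / q y"

lemma continuous_on_likelihood: "continuous_on {0..} (\<lambda>s. likelihood s y)"
  unfolding likelihood_def using q_pos[of y]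
  by (intro continuous_intros continuous_on_marginal) simp

lemma has_derivative_likelihood:
  assumes "0 \<le> t"
  shows "((\<lambda>s. likelihood s y) has_real_derivative gen Pm (likelihood t) y) (at t within {0..})"
proof -
  have "(\<Sum>z\<in>UNIV. P t z * kappa Pm z y) / q y = gen Pm (likelihood t) y"
    unfolding gen_def likelihood_def sum_divide_distrib
  proof (rule sum.cong)
    fix z
    have "q y * kappa Pm y z = q z * kappa Pm z y" using balance by blast
    then show "P t z * kappa Pm z y / q y = kappa Pm y z * (P t z / q z)"
      using q_pos[of y] q_pos[of z] by (simp add: field_simps)
  qed simp
  with DERIV_cdivide[OF marginal_has_derivative[OF assms, of y], where c = "q y"] show ?thesis
    unfolding likelihood_def by simp
qed

lemma gen_integral_likelihood:
  assumes "0 \<le> t0" and "0 \<le> h"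
  shows "gen Pm (\<lambda>z. integral {t0..t0 + h} (\<lambda>s. likelihood s z))
    = (\<lambda>y. likelihood (t0 + h) y - likelihood t0 y)"
proof
  fix y
  have sub: "{t0..t0 + h} \<subseteq> {0..}" using assms by auto
  have "((\<lambda>s. gen Pm (likelihood s) y) has_integral likelihood (t0 + h) y - likelihood t0 y) {t0..t0 + h}"
  proof (rule fundamental_theorem_of_calculus)
    fix x assume "x \<in> {t0..t0 + h}"
    then show "((\<lambda>s. likelihood s y) has_vector_derivative gen Pm (likelihood x) y) (at x within {t0..t0 + h})"
      using has_derivative_likelihood[of x y] sub
      by (auto simp: has_real_derivative_iff_has_vector_derivative[symmetric] intro: DERIV_subset)
  qed (use assms in simp)
  moreover have "((\<lambda>s. gen Pm (likelihood s) y) has_integral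
      gen Pm (\<lambda>z. integral {t0..t0 + h} (\<lambda>s. likelihood s z)) y) {t0..t0 + h}"
    unfolding gen_def
    using integrable_continuous_interval[OF continuous_on_subset[OF continuous_on_likelihood sub]]
    by (intro has_integral_sum has_integral_mult_right integrable_integral) auto
  ultimately show "gen Pm (\<lambda>z. integral {t0..t0 + h} (\<lambda>s. likelihood s z)) y
      = likelihood (t0 + h) y - likelihood t0 y"
    by (rule has_integral_unique[rotated])
qed

definition time_average :: "real \<Rightarrow> real \<Rightarrow> 'a \<Rightarrow> real" where
  "time_average t0 h z = integral {t0..t0 + h} (\<lambda>s. likelihood s z) / h"

lemma gen_time_average:
  assumes "0 \<le> t0" and "0 < h"
  shows "gen Pm (\<lambda>z. h * time_average t0 h z) = (\<lambda>y. P (t0 + h) y / q y - P t0 y / q y)"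
  using gen_integral_likelihood[of t0 h] assms by (simp add: time_average_def likelihood_def)

lemma tendsto_time_average:
  assumes "0 \<le> t0"
  shows "((\<lambda>h. time_average t0 h z) \<longlongrightarrow> likelihood t0 z) (at_right 0)"
  unfolding time_average_def
  by (rule integral_average_tendsto, rule continuous_on_subset[OF continuous_on_likelihood])
    (use assms in auto)

lemma steepest_descent:
  assumes "0 < t0"
  shows "steepest_descent_at (variance_fun q) (rho Pm q) P t0"
proof -
  let ?B = "dirichlet_form Pm q" and ?l = "likelihood t0" and ?u = "time_average t0"
  define U where "U h = - 2 * sqrt (?B (?u h) (?u h))
    + 2 * sqrt (?B (\<lambda>z. ?l z - ?u h z) (\<lambda>z. ?l z - ?u h z)) + 2 * h * sqrt (?B (?u h) (?u h))"
    for h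
  have "\<forall>\<^sub>F h in at_right 0. descent_ratio (variance_fun q) (rho Pm q) P P t0 h \<le> U h"
    using variance_descent_ratio_le[OF stoch balance q_pos _ gen_time_average] assms
    by (intro eventually_mono[OF eventually_at_right_less])
      (simp add: descent_ratio_def U_def likelihood_def)
  moreover have "(U \<longlongrightarrow> - 2 * sqrt (?B ?l ?l) + 2 * sqrt (?B (\<lambda>z. ?l z - ?l z) (\<lambda>z. ?l z - ?l z))
      + 2 * 0 * sqrt (?B ?l ?l)) (at_right 0)"
    unfolding U_def using assms
    by (intro tendsto_intros tendsto_dirichlet_form tendsto_time_average) auto
  moreover have "- 2 * sqrt (?B ?l ?l)
      \<le> (variance_fun q c - variance_fun q (P t0)) / rho Pm q c (P t0)" for c
    using variance_descent_ratio_ge[OF stoch balance q_pos] by (simp add: likelihood_def[abs_def])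
  ultimately show ?thesis
    using smooth_curve assms by (intro steepest_descent_atI) (auto simp: dirichlet_form_def)
qed

end

theorem theorem6p3:
  fixes Pm :: "'a::finite \<Rightarrow> 'a \<Rightarrow> real"
    and q :: "'a \<Rightarrow> real"
    and P :: "real \<Rightarrow> 'a \<Rightarrow> real"
  assumes stoch: "stochastic_matrix Pm"
    and irred: "irreducible_matrix Pm"
    and inv: "invariant_distribution Pm q"
    and balance: "\<forall>y z. q y * kappa Pm y z = q z * kappa Pm z y"
    and init_pos: "\<forall>y. P 0 y > 0"
    and init_sum: "(\<Sum>y\<in>UNIV. P 0 y) = 1"
    and kolmogorov: "\<forall>y t. t \<ge> 0 \<longrightarrow>
        ((\<lambda>s. P s y) has_real_derivative (\<Sum>z\<in>UNIV. P t z * kappa Pm z y)) (at t within {0..})"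
  shows "\<forall>t0 > 0. steepest_descent_at (variance_fun q) (rho Pm q) P t0"
proof -
  interpret reversible_forward_equation Pm P q
    using stoch init_pos init_sum kolmogorov balance invariant_distribution_pos[OF stoch irred inv]
    by unfold_locales auto
  show ?thesis using steepest_descent by blast
qed

end
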